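(* For any parameter of the ranking block, for every instance $I$ (with $n,m\ge1$) and every preference profile $\succcurlyeq_I$ reported truthfully, the matching matrix $\hat{\bm M}_I$ output by NeuralSD at inference satisfies $irv(\hat{\bm M}_I,\succcurlyeq_I)\le 1/2$; i.e. $\max_{I}irv(\hat{\bm M}_I,\succcurlyeq_I)\le1/2$.
   Context: An instance consists of workers $W=\{w_1,\dots,w_n\}$, firms $F=\{f_1,\dots,f_m\}$ and public contexts $\bm X_W\in\mathbb R^{n\times d}$, $\bm X_F\in\mathbb R^{m\times d}$. Workers have linear-order preferences on $F\cup\{\perp\}$, firms on $W\cup\{\perp\}$ ($\perp$ = unmatched); $b\succ_a b'$ means $b\ne b'$, $b\succcurlyeq_a b'$. Serial dictatorship (SD) with ranking $\bm r$ of $W\cup F$: for $k=1,\dots,n+m$, if $r_k$ is not yet matched, it is assigned its most preferred option among $\perp$ and the not-yet-matched agents of the other side. NeuralSD at inference: compute $\bm X=[\bm X_W;\bm X_F]$, $\bm A=\mathrm{softmax}_{\rm row}(\bm X\bm W^Q(\bm X\bm W^K)^\top/\sqrt{d_{\rm emb}})\bm X\bm W^V$, scores $\bm a=\bm w\bm A^\top+b$, tie-broken scores $\bm a+\mathrm{rank}(\bm a)$ with $\mathrm{rank}(\bm a)_i=\#\{j:a_j<a_i\text{ or }(a_j=a_i,j<i)\}$; sort agents by these scores (argsort) to get a ranking $\bm r$, and output the SD matching with ranking $\bm r$ on the reports. Matching matrix $\bm M\in\{0,1\}^{(n+1)\times(m+1)}$: $M_{ij}=1$ iff $w_i$ matched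 with $f_j$, $M_{i,m+1}=1$ iff $w_i$ unmatched, $M_{n+1,j}=1$ iff $f_j$ unmatched, $M_{n+1,m+1}=0$. For $i\in[n],j\in[m]$: $p_{ij}=\frac1m\big(\mathbb I[f_j\succ_{w_i}\perp]+\sum_{j''=1}^m(\mathbb I[f_j\succ_{w_i}f_{j''}]-\mathbb I[\perp\succ_{w_i}f_{j''}])\big)$, $q_{ji}=\frac1n\big(\mathbb I[w_i\succ_{f_j}\perp]+\sum_{i''=1}^n(\mathbb I[w_i\succ_{f_j}w_{i''}]-\mathbb I[\perp\succ_{f_j}w_{i''}])\big)$, and $irv(\bm M,\succcurlyeq)=\frac1{2n}\sum_{i,j}M_{ij}\max\{-q_{ji},0\}+\frac1{2m}\sum_{i,j}M_{ij}\max\{-p_{ij},0\}$ (sums over $i\in[n],j\in[m]$). *)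

theory Defs
  imports Complex_Main
begin

(* Agents: workers W 0..n-1, firms F 0..m-1 (0-based indices). *)
datatype agent = Wk nat | Fk nat

(* Preferences: a worker's weak linear order on firms \<union> {\<bottom>} is a relation on
   nat option (None = \<bottom>, Some j = firm j); (x,y) \<in> R means x \<succeq> y.
   Analogously a firm's order is on workers \<union> {\<bottom>}. *)
definition strict_pref :: "'a rel \<Rightarrow> 'a \<Rightarrow> 'a \<Rightarrow> bool" where
  "strict_pref R x y \<longleftrightarrow> x \<noteq> y \<and> (x, y) \<in> R"

definition best :: "'a rel \<Rightarrow> 'a set \<Rightarrow> 'a" where
  "best R S = (THE x. x \<in> S \<and> (\<forall>y\<in>S. (x, y) \<in> R))"

(* State of SD: set of matched pairs (worker i, firm j) and the set of agents already
   matched (to a partner or to \<bottom>). *)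
type_synonym sd_state = "(nat \<times> nat) set \<times> agent set"

fun sd_step :: "nat \<Rightarrow> nat \<Rightarrow> (nat \<Rightarrow> nat option rel) \<Rightarrow> (nat \<Rightarrow> nat option rel)
    \<Rightarrow> agent \<Rightarrow> sd_state \<Rightarrow> sd_state" where
  "sd_step n m Pw Pf (Wk i) (P, D) =
     (if Wk i \<in> D then (P, D) else
       (case best (Pw i) (insert None (Some ` {j. j < m \<and> Fk j \<notin> D})) of
          None \<Rightarrow> (P, insert (Wk i) D)
        | Some j \<Rightarrow> (insert (i, j) P, insert (Wk i) (insert (Fk j) D))))"
| "sd_step n m Pw Pf (Fk j) (P, D) =
     (if Fk j \<in> D then (P, D) else
       (case best (Pf j) (insert None (Some ` {i. i < n \<and> Wk i \<notin> D})) of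
          None \<Rightarrow> (P, insert (Fk j) D)
        | Some i \<Rightarrow> (insert (i, j) P, insert (Fk j) (insert (Wk i) D))))"

definition serial_dictatorship :: "nat \<Rightarrow> nat \<Rightarrow> (nat \<Rightarrow> nat option rel) \<Rightarrow> (nat \<Rightarrow> nat option rel)
    \<Rightarrow> agent list \<Rightarrow> (nat \<times> nat) set" where
  "serial_dictatorship n m Pw Pf r = fst (fold (sd_step n m Pw Pf) r ({}, {}))"

(* Matching matrix of size (n+1) x (m+1), 0-based: row n / column m stand for \<bottom>. *)
definition matching_matrix :: "nat \<Rightarrow> nat \<Rightarrow> (nat \<times> nat) set \<Rightarrow> nat \<Rightarrow> nat \<Rightarrow> real" where
  "matching_matrix n m P i j =
     (if i < n \<and> j < m then (if (i, j) \<in> P then 1 else 0)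
      else if i < n \<and> j = m then (if \<exists>j'<m. (i, j') \<in> P then 0 else 1)
      else if i = n \<and> j < m then (if \<exists>i'<n. (i', j) \<in> P then 0 else 1)
      else 0)"

(* NeuralSD ranking block. Matrices are functions nat \<Rightarrow> nat \<Rightarrow> real with explicit sizes:
   X : (n+m) x d, WQ, WK : d x de, WV : d x dv, w : dv, b scalar. *)
definition stack_ctx :: "nat \<Rightarrow> (nat \<Rightarrow> nat \<Rightarrow> real) \<Rightarrow> (nat \<Rightarrow> nat \<Rightarrow> real) \<Rightarrow> nat \<Rightarrow> nat \<Rightarrow> real" where
  "stack_ctx n XW XF i l = (if i < n then XW i l else XF (i - n) l)"

definition attn_scores :: "nat \<Rightarrow> nat \<Rightarrow> nat \<Rightarrow> nat \<Rightarrow> (nat \<Rightarrow> nat \<Rightarrow> real)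
    \<Rightarrow> (nat \<Rightarrow> nat \<Rightarrow> real) \<Rightarrow> (nat \<Rightarrow> nat \<Rightarrow> real) \<Rightarrow> (nat \<Rightarrow> nat \<Rightarrow> real)
    \<Rightarrow> (nat \<Rightarrow> real) \<Rightarrow> real \<Rightarrow> nat \<Rightarrow> real" where
  "attn_scores N d de dv X WQ WK WV w b =
     (let Q = (\<lambda>i k. \<Sum>l<d. X i l * WQ l k);
          K = (\<lambda>i k. \<Sum>l<d. X i l * WK l k);
          V = (\<lambda>i c. \<Sum>l<d. X i l * WV l c);
          S = (\<lambda>i j. (\<Sum>k<de. Q i k * K j k) / sqrt (real de));
          Sm = (\<lambda>i j. exp (S i j) / (\<Sum>j'<N. exp (S i j')));
          A = (\<lambda>i c. \<Sum>j<N. Sm i j * V j c)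
      in (\<lambda>i. (\<Sum>c<dv. w c * A i c) + b))"

definition tie_rank :: "nat \<Rightarrow> (nat \<Rightarrow> real) \<Rightarrow> nat \<Rightarrow> real" where
  "tie_rank N a i = real (card {j. j < N \<and> (a j < a i \<or> (a j = a i \<and> j < i))})"

definition agent_of :: "nat \<Rightarrow> nat \<Rightarrow> agent" where
  "agent_of n k = (if k < n then Wk k else Fk (k - n))"

definition neural_ranking :: "nat \<Rightarrow> nat \<Rightarrow> nat \<Rightarrow> nat \<Rightarrow> nat
    \<Rightarrow> (nat \<Rightarrow> nat \<Rightarrow> real) \<Rightarrow> (nat \<Rightarrow> nat \<Rightarrow> real)
    \<Rightarrow> (nat \<Rightarrow> nat \<Rightarrow> real) \<Rightarrow> (nat \<Rightarrow> nat \<Rightarrow> real) \<Rightarrow> (nat \<Rightarrow> nat \<Rightarrow> real)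
    \<Rightarrow> (nat \<Rightarrow> real) \<Rightarrow> real \<Rightarrow> agent list" where
  "neural_ranking n m d de dv XW XF WQ WK WV w b =
     (let N = n + m;
          a = attn_scores N d de dv (stack_ctx n XW XF) WQ WK WV w b;
          t = (\<lambda>i. a i + tie_rank N a i)
      in map (agent_of n) (sort_key t [0..<N]))"

definition neural_sd_matrix :: "nat \<Rightarrow> nat \<Rightarrow> nat \<Rightarrow> nat \<Rightarrow> nat
    \<Rightarrow> (nat \<Rightarrow> nat \<Rightarrow> real) \<Rightarrow> (nat \<Rightarrow> nat \<Rightarrow> real)
    \<Rightarrow> (nat \<Rightarrow> nat \<Rightarrow> real) \<Rightarrow> (nat \<Rightarrow> nat \<Rightarrow> real) \<Rightarrow> (nat \<Rightarrow> nat \<Rightarrow> real)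
    \<Rightarrow> (nat \<Rightarrow> real) \<Rightarrow> real
    \<Rightarrow> (nat \<Rightarrow> nat option rel) \<Rightarrow> (nat \<Rightarrow> nat option rel) \<Rightarrow> nat \<Rightarrow> nat \<Rightarrow> real" where
  "neural_sd_matrix n m d de dv XW XF WQ WK WV w b Pw Pf =
     matching_matrix n m
       (serial_dictatorship n m Pw Pf (neural_ranking n m d de dv XW XF WQ WK WV w b))"

definition ind :: "bool \<Rightarrow> real" where
  "ind P = (if P then 1 else 0)"

definition p_val :: "nat \<Rightarrow> (nat \<Rightarrow> nat option rel) \<Rightarrow> nat \<Rightarrow> nat \<Rightarrow> real" where
  "p_val m Pw i j = (1 / real m) * (ind (strict_pref (Pw i) (Some j) None)
      + (\<Sum>j''<m. ind (strict_pref (Pw i) (Some j) (Some j''))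
                 - ind (strict_pref (Pw i) None (Some j''))))"

definition q_val :: "nat \<Rightarrow> (nat \<Rightarrow> nat option rel) \<Rightarrow> nat \<Rightarrow> nat \<Rightarrow> real" where
  "q_val n Pf j i = (1 / real n) * (ind (strict_pref (Pf j) (Some i) None)
      + (\<Sum>i''<n. ind (strict_pref (Pf j) (Some i) (Some i''))
                 - ind (strict_pref (Pf j) None (Some i''))))"

definition irv :: "nat \<Rightarrow> nat \<Rightarrow> (nat \<Rightarrow> nat option rel) \<Rightarrow> (nat \<Rightarrow> nat option rel)
    \<Rightarrow> (nat \<Rightarrow> nat \<Rightarrow> real) \<Rightarrow> real" where
  "irv n m Pw Pf M =
     (1 / (2 * real n)) * (\<Sum>i<n. \<Sum>j<m. M i j * max (- q_val n Pf j i) 0)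
   + (1 / (2 * real m)) * (\<Sum>i<n. \<Sum>j<m. M i j * max (- p_val m Pw i j) 0)"

end

theory Submission
  imports Defs
begin

(* Every pair formed by serial dictatorship is chosen by one of its two members, who strictly
   prefers the partner to staying unmatched; that member's normalized rank p (resp. q) is then
   nonnegative and contributes nothing to irv. The other member's rank is at least -1, so each
   pair contributes at most max (1/(2n)) (1/(2m)) = 1/(2 min n m), and a matching has at most
   min n m pairs. *)

lemma finite_linear_order_on_has_greatest:
  assumes lo: "linear_order_on A R" and "finite S" "S \<noteq> {}" "S \<subseteq> A"
  shows "\<exists>x\<in>S. \<forall>y\<in>S. (x, y) \<in> R"
  using assms(2-4)
proof (induction S rule: finite_ne_induct)
  case (singleton x)
  then show ?case using lo by (auto simp: order_on_defs refl_on_def)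
next
  case (insert a S)
  then obtain x where x: "x \<in> S" "\<forall>y\<in>S. (x, y) \<in> R" by auto
  have "a \<noteq> x" using insert.hyps x(1) by blast
  then have refl: "(a, a) \<in> R" and total: "(a, x) \<in> R \<or> (x, a) \<in> R"
    using lo insert.prems x by (auto simp: order_on_defs refl_on_def total_on_def)
  from total show ?case
  proof
    assume "(a, x) \<in> R"
    then have "\<forall>y\<in>S. (a, y) \<in> R"
      using x lo by (auto simp: order_on_defs dest: transD)
    then show ?case using refl by blast
  next
    assume "(x, a) \<in> R"
    then show ?case using x by blast
  qed
qed

lemma best_greatest:
  assumes lo: "linear_order_on A R" and "finite S" "S \<noteq> {}" "S \<subseteq> A"
  shows "best R S \<in> S \<and> (\<forall>y\<in>S. (best R S, y) \<in> R)"
proof -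
  obtain x where x: "x \<in> S" "\<forall>y\<in>S. (x, y) \<in> R"
    using finite_linear_order_on_has_greatest[OF assms] by blast
  have "antisym R" using lo by (simp add: order_on_defs)
  then have "best R S = x"
    unfolding best_def using x by (blast intro: the_equality dest: antisymD)
  with x show ?thesis by simp
qed

lemma best_Some_strict_pref_None:
  assumes "linear_order_on A R" "finite S" "insert None (Some ` S) \<subseteq> A"
    and "best R (insert None (Some ` S)) = Some x"
  shows "x \<in> S \<and> strict_pref R (Some x) None"
  using best_greatest[OF assms(1) _ _ assms(3)] assms(2,4) by (auto simp: strict_pref_def)

definition is_matching :: "nat \<Rightarrow> nat \<Rightarrow> (nat \<times> nat) set \<Rightarrow> bool" where
  "is_matching n m P \<longleftrightarrow> P \<subseteq> {..<n} \<times> {..<m} \<and> inj_on fst P \<and> inj_on snd P"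

lemma card_matching_le: "is_matching n m P \<Longrightarrow> card P \<le> min n m"
  using card_inj_on_le[of fst P "{..<n}"] card_inj_on_le[of snd P "{..<m}"]
  by (force simp: is_matching_def)

definition acceptable_to_one_side :: "(nat \<Rightarrow> nat option rel) \<Rightarrow> (nat \<Rightarrow> nat option rel)
    \<Rightarrow> (nat \<times> nat) set \<Rightarrow> bool" where
  "acceptable_to_one_side Pw Pf P \<longleftrightarrow>
     (\<forall>(i, j)\<in>P. strict_pref (Pw i) (Some j) None \<or> strict_pref (Pf j) (Some i) None)"

definition sd_invariant :: "nat \<Rightarrow> nat \<Rightarrow> (nat \<Rightarrow> nat option rel) \<Rightarrow> (nat \<Rightarrow> nat option rel)
    \<Rightarrow> sd_state \<Rightarrow> bool" where
  "sd_invariant n m Pw Pf = (\<lambda>(P, D). is_matching n m P \<and> acceptable_to_one_side Pw Pf P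
     \<and> (\<forall>(i, j)\<in>P. Wk i \<in> D \<and> Fk j \<in> D))"

lemma sd_invariant_init: "sd_invariant n m Pw Pf ({}, {})"
  by (simp add: sd_invariant_def is_matching_def acceptable_to_one_side_def)

lemma sd_invariant_mark_agent:
  "sd_invariant n m Pw Pf (P, D) \<Longrightarrow> sd_invariant n m Pw Pf (P, insert a D)"
  by (auto simp: sd_invariant_def)

lemma sd_invariant_insert_pair:
  assumes "sd_invariant n m Pw Pf (P, D)" "i < n" "j < m" "Wk i \<notin> D" "Fk j \<notin> D"
    and "strict_pref (Pw i) (Some j) None \<or> strict_pref (Pf j) (Some i) None"
  shows "sd_invariant n m Pw Pf (insert (i, j) P, insert (Wk i) (insert (Fk j) D))"
proof -
  have "(i, j') \<notin> P" "(i', j) \<notin> P" for i' j'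
    using assms(1,4,5) by (auto simp: sd_invariant_def)
  then have "inj_on fst (insert (i, j) P)" "inj_on snd (insert (i, j) P)"
    using assms(1) by (force simp: sd_invariant_def is_matching_def inj_on_def)+
  with assms show ?thesis
    by (auto simp: sd_invariant_def is_matching_def acceptable_to_one_side_def)
qed

lemma sd_step_preserves_invariant:
  assumes lw: "\<And>i. i < n \<Longrightarrow> linear_order_on (insert None (Some ` {..<m})) (Pw i)"
    and lf: "\<And>j. j < m \<Longrightarrow> linear_order_on (insert None (Some ` {..<n})) (Pf j)"
    and a: "a \<in> Wk ` {..<n} \<union> Fk ` {..<m}"
    and inv: "sd_invariant n m Pw Pf (P, D)"
  shows "sd_invariant n m Pw Pf (sd_step n m Pw Pf a (P, D))"
  using a
proof
  assume "a \<in> Wk ` {..<n}"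
  then obtain i where a: "a = Wk i" and i: "i < n" by auto
  let ?S = "{j. j < m \<and> Fk j \<notin> D}"
  show ?thesis
  proof (cases "Wk i \<in> D \<or> best (Pw i) (insert None (Some ` ?S)) = None")
    case True
    then show ?thesis using a inv by (auto simp: sd_invariant_mark_agent)
  next
    case False
    then obtain j where j: "best (Pw i) (insert None (Some ` ?S)) = Some j" and "Wk i \<notin> D"
      by auto
    moreover have "j < m" "Fk j \<notin> D" "strict_pref (Pw i) (Some j) None"
      using best_Some_strict_pref_None[OF lw[OF i] _ _ j] by auto
    ultimately show ?thesis using a i inv by (simp add: sd_invariant_insert_pair)
  qed
next
  assume "a \<in> Fk ` {..<m}"
  then obtain j where a: "a = Fk j" and j: "j < m" by auto
  let ?S = "{i. i < n \<and> Wk i \<notin> D}"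
  show ?thesis
  proof (cases "Fk j \<in> D \<or> best (Pf j) (insert None (Some ` ?S)) = None")
    case True
    then show ?thesis using a inv by (auto simp: sd_invariant_mark_agent)
  next
    case False
    then obtain i where i: "best (Pf j) (insert None (Some ` ?S)) = Some i" and "Fk j \<notin> D"
      by auto
    moreover have "i < n" "Wk i \<notin> D" "strict_pref (Pf j) (Some i) None"
      using best_Some_strict_pref_None[OF lf[OF j] _ _ i] by auto
    ultimately show ?thesis
      using a j inv sd_invariant_insert_pair[of n m Pw Pf P D i j] by (simp add: insert_commute)
  qed
qed

lemma serial_dictatorship_acceptable_matching:
  assumes lw: "\<And>i. i < n \<Longrightarrow> linear_order_on (insert None (Some ` {..<m})) (Pw i)"
    and lf: "\<And>j. j < m \<Longrightarrow> linear_order_on (insert None (Some ` {..<n})) (Pf j)"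
    and r: "set r \<subseteq> Wk ` {..<n} \<union> Fk ` {..<m}"
  defines "P \<equiv> serial_dictatorship n m Pw Pf r"
  shows "is_matching n m P \<and> acceptable_to_one_side Pw Pf P"
proof -
  have "sd_invariant n m Pw Pf (fold (sd_step n m Pw Pf) r st)"
    if "sd_invariant n m Pw Pf st" for st
    using r that
  proof (induction r arbitrary: st)
    case (Cons a r)
    then show ?case
      using sd_step_preserves_invariant[OF lw lf] by (cases st) simp
  qed simp
  from this[OF sd_invariant_init] show ?thesis
    unfolding P_def serial_dictatorship_def by (auto simp: sd_invariant_def split: prod.splits)
qed

lemma neural_ranking_agents:
  "set (neural_ranking n m d de dv XW XF WQ WK WV w b) \<subseteq> Wk ` {..<n} \<union> Fk ` {..<m}"
  by (auto simp: neural_ranking_def agent_of_def Let_def)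

lemma strict_pref_trans:
  "trans R \<Longrightarrow> antisym R \<Longrightarrow> strict_pref R x y \<Longrightarrow> strict_pref R y z \<Longrightarrow> strict_pref R x z"
  unfolding strict_pref_def by (metis antisymD transD)

lemma q_val_eq_p_val: "q_val = p_val"
  by (intro ext) (simp add: p_val_def q_val_def)

lemma p_val_ge_minus_one: "p_val m Pw i j \<ge> -1"
proof (cases "m = 0")
  case False
  have "(\<Sum>j''<m. ind (strict_pref (Pw i) (Some j) (Some j'')) - ind (strict_pref (Pw i) None (Some j'')))
      \<ge> (\<Sum>j''<m. -1)"
    by (rule sum_mono) (simp add: ind_def)
  then have "ind (strict_pref (Pw i) (Some j) None)
      + (\<Sum>j''<m. ind (strict_pref (Pw i) (Some j) (Some j'')) - ind (strict_pref (Pw i) None (Some j'')))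
      \<ge> - real m"
    by (simp add: ind_def)
  with False show ?thesis unfolding p_val_def by (simp add: field_simps)
qed (simp add: p_val_def)

lemma p_val_nonneg_if_acceptable:
  assumes "trans (Pw i)" "antisym (Pw i)" "strict_pref (Pw i) (Some j) None"
  shows "p_val m Pw i j \<ge> 0"
proof -
  have "ind (strict_pref (Pw i) None (Some j'')) \<le> ind (strict_pref (Pw i) (Some j) (Some j''))" for j''
    using strict_pref_trans[OF assms] by (simp add: ind_def)
  then have "(\<Sum>j''<m. ind (strict_pref (Pw i) (Some j) (Some j'')) - ind (strict_pref (Pw i) None (Some j'')))
      \<ge> 0"
    by (simp add: sum_nonneg)
  then show ?thesis unfolding p_val_def by (simp add: ind_def)
qed

lemma irv_acceptable_matching_le_half:
  assumes pw: "\<And>i. i < n \<Longrightarrow> trans (Pw i) \<and> antisym (Pw i)"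
    and pf: "\<And>j. j < m \<Longrightarrow> trans (Pf j) \<and> antisym (Pf j)"
    and P: "is_matching n m P" and acc: "acceptable_to_one_side Pw Pf P"
  shows "irv n m Pw Pf (matching_matrix n m P) \<le> 1 / 2"
proof -
  define t where "t i j = 1 / (2 * real n) * max (- p_val n Pf j i) 0
    + 1 / (2 * real m) * max (- p_val m Pw i j) 0" for i j
  define c where "c = 1 / (2 * real (min n m))"
  have P_range: "P \<subseteq> {..<n} \<times> {..<m}" using P by (simp add: is_matching_def)
  have "irv n m Pw Pf (matching_matrix n m P) = (\<Sum>i<n. \<Sum>j<m. matching_matrix n m P i j * t i j)"
    unfolding irv_def t_def q_val_eq_p_val
    by (simp add: sum_distrib_left sum.distrib[symmetric] algebra_simps)
  also have "\<dots> = (\<Sum>i<n. \<Sum>j<m. if (i, j) \<in> P then t i j else 0)"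
    by (intro sum.cong) (simp_all add: matching_matrix_def)
  also have "\<dots> = (\<Sum>(i, j)\<in>{..<n} \<times> {..<m}. if (i, j) \<in> P then t i j else 0)"
    by (rule sum.cartesian_product)
  also have "\<dots> = (\<Sum>(i, j)\<in>P. t i j)"
    using P_range by (intro sum.mono_neutral_cong_right) auto
  also have "\<dots> \<le> card P * c"
  proof (rule sum_bounded_above, clarify)
    fix i j assume ij: "(i, j) \<in> P"
    then have "i < n" "j < m" using P_range by auto
    have "t i j \<le> 1 / (2 * real n) \<or> t i j \<le> 1 / (2 * real m)"
      using acc ij pw[OF \<open>i < n\<close>] pf[OF \<open>j < m\<close>]
        p_val_ge_minus_one[of n Pf j i] p_val_ge_minus_one[of m Pw i j]
        p_val_nonneg_if_acceptable[of Pw i j m] p_val_nonneg_if_acceptable[of Pf j i n]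
      unfolding t_def acceptable_to_one_side_def by (fastforce simp: divide_right_mono)
    moreover have "1 / (2 * real n) \<le> c" "1 / (2 * real m) \<le> c"
      using \<open>i < n\<close> \<open>j < m\<close> unfolding c_def by (auto intro!: divide_left_mono)
    ultimately show "t i j \<le> c" by linarith
  qed
  also have "\<dots> \<le> 1 / 2"
  proof -
    have "card P \<le> min n m" using P by (rule card_matching_le)
    then show ?thesis unfolding c_def by (cases "min n m = 0") (auto simp: field_simps)
  qed
  finally show ?thesis .
qed

theorem proposition5:
  fixes n m d de dv :: nat
    and XW XF WQ WK WV :: "nat \<Rightarrow> nat \<Rightarrow> real"
    and w :: "nat \<Rightarrow> real" and b :: real
    and Pw Pf :: "nat \<Rightarrow> nat option rel"
  assumes "n \<ge> 1" and "m \<ge> 1"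
    and "\<And>i. i < n \<Longrightarrow> linear_order_on (insert None (Some ` {..<m})) (Pw i)"
    and "\<And>j. j < m \<Longrightarrow> linear_order_on (insert None (Some ` {..<n})) (Pf j)"
  shows "irv n m Pw Pf (neural_sd_matrix n m d de dv XW XF WQ WK WV w b Pw Pf) \<le> 1 / 2"
proof -
  define P where "P = serial_dictatorship n m Pw Pf (neural_ranking n m d de dv XW XF WQ WK WV w b)"
  have "is_matching n m P \<and> acceptable_to_one_side Pw Pf P"
    unfolding P_def by (rule serial_dictatorship_acceptable_matching[OF assms(3,4) neural_ranking_agents])
  moreover have "trans (Pw i) \<and> antisym (Pw i)" if "i < n" for i
    using assms(3)[OF that] by (simp add: order_on_defs)
  moreover have "trans (Pf j) \<and> antisym (Pf j)" if "j < m" for j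
    using assms(4)[OF that] by (simp add: order_on_defs)
  ultimately show ?thesis
    unfolding neural_sd_matrix_def P_def[symmetric] by (blast intro: irv_acceptable_matching_le_half)
qed

end
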